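(* Let $H$ and $I$ be $r$-element subsets of $[n]$ with $H\le I$. (i) If $P,Q$ are $x$-element subsets of $[r]$ with $P\le Q$, then $H_P\le I_Q$ (as $x$-element subsets of $[n]$). (ii) If $P,Q$ are $y$-element subsets of $[n-r]$ with $P\le Q$, then $H^+_P\le I^+_Q$ (as $(r+y)$-element subsets of $[n]$).
   Context: $[n]=\{1,\dots,n\}$; subsets are written in increasing order. For $k$-element subsets $H=\{h_1<\dots<h_k\}$, $I=\{i_1<\dots<i_k\}$ of $[n]$, $H\le I$ means $h_a\le i_a$ for all $1\le a\le k$. For $I=\{i_1<\dots<i_r\}$ and $P=\{p_1<\dots<p_x\}\subseteq[r]$, $I_P=\{i_{p_1}<\dots<i_{p_x}\}$. For $P\subseteq[n-r]$ of cardinality $y$, $I^+_P=I\cup(I^c)_P$, where $I^c=[n]\setminus I$ written increasingly as $\{i^c_1<\dots<i^c_{n-r}\}$ and $(I^c)_P=\{i^c_{p}:p\in P\}$. *)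

theory Defs
  imports Main
begin

definition elt :: "nat set \<Rightarrow> nat \<Rightarrow> nat" where
  "elt S a = sorted_list_of_set S ! (a - 1)"

definition gale_le :: "nat set \<Rightarrow> nat set \<Rightarrow> bool" where
  "gale_le H I \<longleftrightarrow> card H = card I \<and> (\<forall>a\<in>{1..card H}. elt H a \<le> elt I a)"

definition sub_sel :: "nat set \<Rightarrow> nat set \<Rightarrow> nat set" where
  "sub_sel I P = (\<lambda>p. elt I p) ` P"

definition plus_sel :: "nat \<Rightarrow> nat set \<Rightarrow> nat set \<Rightarrow> nat set" where
  "plus_sel n I P = I \<union> sub_sel ({1..n} - I) P"

end

theory Submission
  imports Defs
begin

text \<open>A finite set \<open>S\<close> of naturals is encoded by its counting function
  \<open>t \<mapsto> #{s \<in> S. s \<le> t}\<close>. Then \<open>H \<le> I\<close> in the Gale order iff the counting function of \<open>I\<close>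
  is pointwise below that of \<open>H\<close>. Both selections transform counting functions explicitly:
  the one of \<open>I\<^sub>P\<close> is \<open>c\<^sub>P \<circ> c\<^sub>I\<close>, and the one of \<open>I\<^sup>+\<^sub>P\<close> is \<open>t \<mapsto> c\<^sub>I t + c\<^sub>P (min t n - c\<^sub>I t)\<close>.
  The first is monotone in both \<open>c\<^sub>P\<close> and \<open>c\<^sub>I\<close>; the second is monotone because \<open>c\<^sub>P\<close>
  increases by at most one per step, so \<open>c \<mapsto> c + c\<^sub>P (m - c)\<close> is nondecreasing.\<close>

definition count_le :: "nat set \<Rightarrow> nat \<Rightarrow> nat" where
  "count_le S t = card {s\<in>S. s \<le> t}"

lemma elt_mem:
  assumes "finite S" "a \<in> {1..card S}"
  shows "elt S a \<in> S"
proof -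
  have "a - 1 < length (sorted_list_of_set S)" using assms by auto
  then show ?thesis unfolding elt_def using assms(1) by (metis nth_mem set_sorted_list_of_set)
qed

lemma elt_strict_mono:
  assumes "finite S" "1 \<le> a" "a < b" "b \<le> card S"
  shows "elt S a < elt S b"
proof -
  have "a - 1 < b - 1" "b - 1 < length (sorted_list_of_set S)" using assms by auto
  then show ?thesis
    unfolding elt_def by (rule sorted_wrt_nth_less[OF strict_sorted_list_of_set])
qed

lemma elt_le_elt_iff:
  assumes "finite S" "a \<in> {1..card S}" "b \<in> {1..card S}"
  shows "elt S a \<le> elt S b \<longleftrightarrow> a \<le> b"
  using elt_strict_mono[OF assms(1), of a b] elt_strict_mono[OF assms(1), of b a] assms(2,3)
  by (cases a b rule: linorder_cases) auto

lemma inj_on_elt: "finite S \<Longrightarrow> inj_on (elt S) {1..card S}"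
  by (rule inj_onI) (metis elt_le_elt_iff order_antisym order_refl)

lemma elt_image:
  assumes "finite S"
  shows "elt S ` {1..card S} = S"
proof (rule card_subset_eq)
  show "elt S ` {1..card S} \<subseteq> S" using elt_mem[OF assms] by auto
  show "card (elt S ` {1..card S}) = card S" using card_image[OF inj_on_elt[OF assms]] by simp
qed (rule assms)

lemma count_le_mono: "t \<le> u \<Longrightarrow> finite S \<Longrightarrow> count_le S t \<le> count_le S u"
  unfolding count_le_def by (intro card_mono) auto

lemma count_le_le_card: "finite S \<Longrightarrow> count_le S t \<le> card S"
  unfolding count_le_def by (intro card_mono) auto

lemma count_le_elt:
  assumes S: "finite S" and j: "j \<in> {1..card S}"
  shows "count_le S (elt S j) = j"
proof -
  have "{s\<in>S. s \<le> elt S j} = elt S ` {1..j}"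
  proof -
    have "{s\<in>S. s \<le> elt S j} = {s \<in> elt S ` {1..card S}. s \<le> elt S j}"
      by (simp only: elt_image[OF S])
    also have "\<dots> = elt S ` {i\<in>{1..card S}. elt S i \<le> elt S j}" by blast
    also have "{i\<in>{1..card S}. elt S i \<le> elt S j} = {1..j}"
      using elt_le_elt_iff[OF S _ j] j by auto
    finally show ?thesis .
  qed
  moreover have "inj_on (elt S) {1..j}"
    using inj_on_elt[OF S] by (rule inj_on_subset) (use j in auto)
  ultimately show ?thesis unfolding count_le_def by (simp add: card_image)
qed

lemma elt_le_iff_le_count_le:
  assumes S: "finite S" and j: "j \<in> {1..card S}"
  shows "elt S j \<le> t \<longleftrightarrow> j \<le> count_le S t"
proof
  assume "elt S j \<le> t"
  then show "j \<le> count_le S t"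
    using count_le_mono[OF _ S] count_le_elt[OF S j] by metis
next
  assume j_le: "j \<le> count_le S t"
  show "elt S j \<le> t"
  proof (rule ccontr)
    assume "\<not> elt S j \<le> t"
    then have "{s\<in>S. s \<le> t} \<subset> {s\<in>S. s \<le> elt S j}"
      using elt_mem[OF S j] by auto
    then have "count_le S t < count_le S (elt S j)"
      unfolding count_le_def using S by (intro psubset_card_mono) auto
    then show False using j_le count_le_elt[OF S j] by simp
  qed
qed

lemma gale_le_iff_count_le:
  assumes A: "finite A" and B: "finite B" and AB: "card A = card B"
  shows "gale_le A B \<longleftrightarrow> (\<forall>t. count_le B t \<le> count_le A t)"
proof
  assume gale: "gale_le A B"
  show "\<forall>t. count_le B t \<le> count_le A t"
  proof
    fix t
    let ?m = "count_le B t"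
    show "?m \<le> count_le A t"
    proof (cases "?m = 0")
      case False
      then have m: "?m \<in> {1..card B}" using count_le_le_card[OF B] by auto
      have "elt A ?m \<le> elt B ?m" using gale m AB unfolding gale_le_def by auto
      also have "elt B ?m \<le> t" using elt_le_iff_le_count_le[OF B m] by simp
      finally show ?thesis using elt_le_iff_le_count_le[OF A] m AB by simp
    qed simp
  qed
next
  assume count: "\<forall>t. count_le B t \<le> count_le A t"
  show "gale_le A B" unfolding gale_le_def
  proof (intro conjI ballI)
    fix a assume a: "a \<in> {1..card A}"
    have "a \<le> count_le B (elt B a)"
      using elt_le_iff_le_count_le[OF B, of a "elt B a"] a AB by simp
    then have "a \<le> count_le A (elt B a)" using count le_trans by blast
    then show "elt A a \<le> elt B a" using elt_le_iff_le_count_le[OF A a] by simp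
  qed (rule AB)
qed

lemma count_le_le_if_gale_le:
  "finite A \<Longrightarrow> finite B \<Longrightarrow> gale_le A B \<Longrightarrow> count_le B t \<le> count_le A t"
  using gale_le_iff_count_le gale_le_def by blast

lemma count_le_add_le: "finite S \<Longrightarrow> count_le S (u + d) \<le> count_le S u + d"
proof -
  assume S: "finite S"
  have "{s\<in>S. s \<le> u + d} \<subseteq> {s\<in>S. s \<le> u} \<union> {u<..u+d}" by auto
  then have "count_le S (u + d) \<le> card ({s\<in>S. s \<le> u} \<union> {u<..u+d})"
    unfolding count_le_def by (intro card_mono) (use S in auto)
  also have "\<dots> \<le> count_le S u + card {u<..u+d}"
    unfolding count_le_def by (rule card_Un_le)
  finally show ?thesis by simp
qed

lemma add_count_le_diff_mono:
  assumes Q: "finite Q" and PQ: "\<And>u. count_le Q u \<le> count_le P u"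
    and "a \<le> b" "b \<le> m"
  shows "a + count_le Q (m - a) \<le> b + count_le P (m - b)"
proof -
  have "count_le Q (m - a) = count_le Q ((m - b) + (b - a))"
    using assms(3,4) by (simp add: algebra_simps)
  also have "\<dots> \<le> count_le Q (m - b) + (b - a)" by (rule count_le_add_le[OF Q])
  also have "\<dots> \<le> count_le P (m - b) + (b - a)" using PQ by simp
  finally show ?thesis using assms(3) by simp
qed

lemma count_le_Un_disjoint:
  "finite A \<Longrightarrow> finite B \<Longrightarrow> A \<inter> B = {} \<Longrightarrow> count_le (A \<union> B) t = count_le A t + count_le B t"
  unfolding count_le_def
  by (subst card_Un_disjoint[symmetric]) (auto intro: arg_cong[where f = card])

lemma count_le_atLeastAtMost: "count_le {1..n} t = min t n"
proof -
  have "{s\<in>{1..n}. s \<le> t} = {1..min t n}" by auto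
  then show ?thesis unfolding count_le_def by simp
qed

lemma count_le_Diff_atLeastAtMost:
  assumes "S \<subseteq> {1..n}"
  shows "count_le ({1..n} - S) t = min t n - count_le S t"
proof -
  have "count_le {1..n} t = count_le S t + count_le ({1..n} - S) t"
    using count_le_Un_disjoint[of S "{1..n} - S" t] assms finite_subset
    by (metis Diff_disjoint Un_Diff_cancel Un_absorb1 finite_Diff finite_atLeastAtMost)
  then show ?thesis using count_le_atLeastAtMost by simp
qed

lemma finite_sub_sel: "finite P \<Longrightarrow> finite (sub_sel S P)"
  unfolding sub_sel_def by simp

lemma card_sub_sel: "finite S \<Longrightarrow> P \<subseteq> {1..card S} \<Longrightarrow> card (sub_sel S P) = card P"
  unfolding sub_sel_def by (metis card_image inj_on_elt inj_on_subset)

lemma count_le_sub_sel: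
  assumes S: "finite S" and P: "P \<subseteq> {1..card S}"
  shows "count_le (sub_sel S P) t = count_le P (count_le S t)"
proof -
  have "{s\<in>sub_sel S P. s \<le> t} = elt S ` {p\<in>P. p \<le> count_le S t}"
    unfolding sub_sel_def using P elt_le_iff_le_count_le[OF S] by auto
  moreover have "inj_on (elt S) {p\<in>P. p \<le> count_le S t}"
    using inj_on_elt[OF S] by (rule inj_on_subset) (use P in auto)
  ultimately show ?thesis unfolding count_le_def by (simp add: card_image)
qed

lemma
  assumes S: "S \<subseteq> {1..n}" and P: "P \<subseteq> {1..n - card S}"
  shows count_le_plus_sel: "count_le (plus_sel n S P) t = count_le S t + count_le P (min t n - count_le S t)"
    and card_plus_sel: "card (plus_sel n S P) = card S + card P"
    and finite_plus_sel: "finite (plus_sel n S P)"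
proof -
  have fin: "finite S" "finite P" using S P finite_subset by auto
  have "card ({1..n} - S) = n - card S" using S by (simp add: card_Diff_subset fin)
  then have P': "P \<subseteq> {1..card ({1..n} - S)}" using P by simp
  have disj: "S \<inter> sub_sel ({1..n} - S) P = {}"
    unfolding sub_sel_def using elt_mem[of "{1..n} - S"] P' by auto
  note fin_sel = finite_sub_sel[OF fin(2)]
  show "count_le (plus_sel n S P) t = count_le S t + count_le P (min t n - count_le S t)"
    unfolding plus_sel_def count_le_Un_disjoint[OF fin(1) fin_sel disj]
    using count_le_sub_sel[OF _ P'] count_le_Diff_atLeastAtMost[OF S] by simp
  show "card (plus_sel n S P) = card S + card P"
    unfolding plus_sel_def using card_Un_disjoint[OF fin(1) fin_sel disj] card_sub_sel[OF _ P']
    by simp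
  show "finite (plus_sel n S P)" unfolding plus_sel_def using fin(1) fin_sel by simp
qed

lemma gale_le_sub_sel:
  assumes H: "finite H" and I: "finite I" and HI: "gale_le H I"
    and P: "P \<subseteq> {1..card H}" and Q: "Q \<subseteq> {1..card I}" and PQ: "gale_le P Q"
  shows "gale_le (sub_sel H P) (sub_sel I Q)"
proof -
  have fin: "finite P" "finite Q" using P Q finite_subset by auto
  have cards: "card H = card I" "card P = card Q" using HI PQ unfolding gale_le_def by auto
  note HI' = count_le_le_if_gale_le[OF H I HI]
  note PQ' = count_le_le_if_gale_le[OF fin PQ]
  have "count_le (sub_sel I Q) t \<le> count_le (sub_sel H P) t" for t
  proof -
    have "count_le (sub_sel I Q) t = count_le Q (count_le I t)" by (rule count_le_sub_sel[OF I Q])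
    also have "\<dots> \<le> count_le Q (count_le H t)" by (rule count_le_mono[OF HI' fin(2)])
    also have "\<dots> \<le> count_le P (count_le H t)" by (rule PQ')
    also have "\<dots> = count_le (sub_sel H P) t" by (rule count_le_sub_sel[OF H P, symmetric])
    finally show ?thesis .
  qed
  then show ?thesis
    using gale_le_iff_count_le[OF finite_sub_sel[OF fin(1)] finite_sub_sel[OF fin(2)]]
      card_sub_sel[OF H P] card_sub_sel[OF I Q] cards by simp
qed

lemma gale_le_plus_sel:
  assumes H: "H \<subseteq> {1..n}" and I: "I \<subseteq> {1..n}" and HI: "gale_le H I"
    and P: "P \<subseteq> {1..n - card H}" and Q: "Q \<subseteq> {1..n - card I}" and PQ: "gale_le P Q"
  shows "gale_le (plus_sel n H P) (plus_sel n I Q)"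
proof -
  have fin: "finite H" "finite I" "finite P" "finite Q"
    using H I P Q by (meson finite_atLeastAtMost finite_subset)+
  have cards: "card H = card I" "card P = card Q" using HI PQ unfolding gale_le_def by auto
  note HI' = count_le_le_if_gale_le[OF fin(1,2) HI]
  note PQ' = count_le_le_if_gale_le[OF fin(3,4) PQ]
  have "count_le (plus_sel n I Q) t \<le> count_le (plus_sel n H P) t" for t
  proof -
    have "count_le H t \<le> count_le {1..n} t"
      unfolding count_le_def using H by (intro card_mono) auto
    then have "count_le H t \<le> min t n" unfolding count_le_atLeastAtMost .
    then show ?thesis
      unfolding count_le_plus_sel[OF H P] count_le_plus_sel[OF I Q]
      by (rule add_count_le_diff_mono[OF fin(4) PQ' HI'])
  qed
  then show ?thesis
    using gale_le_iff_count_le[OF finite_plus_sel[OF H P] finite_plus_sel[OF I Q]]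
      card_plus_sel[OF H P] card_plus_sel[OF I Q] cards by simp
qed

theorem lemma1:
  fixes n r :: nat and H I :: "nat set"
  assumes "H \<subseteq> {1..n}" and "I \<subseteq> {1..n}"
    and "card H = r" and "card I = r"
    and "gale_le H I"
  shows "(\<forall>x P Q. P \<subseteq> {1..r} \<and> Q \<subseteq> {1..r} \<and> card P = x \<and> card Q = x \<and> gale_le P Q
            \<longrightarrow> card (sub_sel H P) = x \<and> card (sub_sel I Q) = x
                \<and> gale_le (sub_sel H P) (sub_sel I Q))
       \<and> (\<forall>y P Q. P \<subseteq> {1..n - r} \<and> Q \<subseteq> {1..n - r} \<and> card P = y \<and> card Q = y \<and> gale_le P Q
            \<longrightarrow> card (plus_sel n H P) = r + y \<and> card (plus_sel n I Q) = r + y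
                \<and> gale_le (plus_sel n H P) (plus_sel n I Q))"
proof -
  have fin: "finite H" "finite I" using assms(1,2) finite_subset by auto
  show ?thesis
    using gale_le_sub_sel[OF fin assms(5)] card_sub_sel[OF fin(1)] card_sub_sel[OF fin(2)]
      gale_le_plus_sel[OF assms(1,2,5)] card_plus_sel[OF assms(1)] card_plus_sel[OF assms(2)]
      assms(3,4) by auto
qed

end
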